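(* For all $\mu>0$, $x\ge 0$ and $y>0$, $$\frac{P_{\mu+1}(x,y)}{P_{\mu}(x,y)}<c_{\mu+1}(x,y).$$
   Context: For $\mu>0$, $x>0$, $y\ge0$, the generalized Marcum $P$-function is $P_{\mu}(x,y)=x^{\frac12(1-\mu)}\int_0^{y} t^{\frac12(\mu-1)}e^{-t-x}I_{\mu-1}(2\sqrt{xt})\,dt$ ($I_\nu$ the modified Bessel function of the first kind); at $x=0$ it is defined by continuity, $P_\mu(0,y)=\gamma(\mu,y)/\Gamma(\mu)$ with $\gamma(\mu,y)=\int_0^y t^{\mu-1}e^{-t}dt$. For $x>0$, $y>0$, $c_{\mu}(x,y)=\sqrt{y/x}\,I_{\mu}(2\sqrt{xy})/I_{\mu-1}(2\sqrt{xy})$, and $c_\mu(0,y)=y/\mu$ (its limit as $x\to0^+$). *)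

theory Defs
  imports "HOL-Analysis.Analysis"
begin

text \<open>At z = 0 we use the limiting value (1 if nu = 0, else 0; only nu > -1 matters here).\<close>
definition bessel_I :: "real \<Rightarrow> real \<Rightarrow> real" where
  "bessel_I nu z =
     (if z = 0 then (if nu = 0 then 1 else 0)
      else (z / 2) powr nu * (\<Sum>k. (z / 2) ^ (2 * k) / (fact k * Gamma (real k + nu + 1))))"

definition lower_gamma :: "real \<Rightarrow> real \<Rightarrow> real" where
  "lower_gamma mu y = integral {0..y} (\<lambda>t. t powr (mu - 1) * exp (- t))"

definition marcumP :: "real \<Rightarrow> real \<Rightarrow> real \<Rightarrow> real" where
  "marcumP mu x y =
     (if x = 0 then lower_gamma mu y / Gamma mu
      else x powr ((1 - mu) / 2) *
        integral {0..y} (\<lambda>t. t powr ((mu - 1) / 2) * exp (- t - x) * bessel_I (mu - 1) (2 * sqrt (x * t))))"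

definition marcum_c :: "real \<Rightarrow> real \<Rightarrow> real \<Rightarrow> real" where
  "marcum_c mu x y =
     (if x = 0 then y / mu
      else sqrt (y / x) * bessel_I mu (2 * sqrt (x * y)) / bessel_I (mu - 1) (2 * sqrt (x * y)))"

end

theory Submission
  imports Defs
begin

text \<open>
  Write e_m(x) = sum_{j<=m} x^j/j! for the truncated exponential series.
  Differentiating e^{-x-t} t^mu sum_m e_m(x) t^m / Gamma(m+mu+1) in t gives the integrand
  of P_mu(x,.), so P_mu(x,y) = e^{-x-y} y^mu sum_m u_m with u_m = e_m(x) y^m / Gamma(m+mu+1).
  Since Gamma(m+mu+2) = (m+mu+1) Gamma(m+mu+1), this turns P_{mu+1}/P_mu into
  y sum_m u_m r_m / sum_m u_m with r_m = 1/(m+mu+1), while the Bessel series turn c_{mu+1}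
  into y sum_k v_k r_k / sum_k v_k with v_k = (xy)^k / (k! Gamma(k+mu+1)).
  Both are weighted means of the decreasing sequence r, and u_m/v_m = e_m(x) m!/x^m
  increases with m, so the u-weights put more mass on the small values of r;
  a Chebyshev-type sum inequality makes this strict.
\<close>

lemma Gamma_plus1_of_pos: "(z::real) > 0 \<Longrightarrow> Gamma (z + 1) = z * Gamma z"
  by (rule Gamma_plus1) (auto elim!: nonpos_Ints_cases)

lemma summable_power_div_Gamma:
  fixes z a :: real
  assumes "a > 0"
  shows "summable (\<lambda>m. \<bar>z\<bar> ^ m / Gamma (real m + a))"
proof (rule summable_ratio_test[where c = "1/2" and N = "nat \<lceil>2 * \<bar>z\<bar>\<rceil>"])
  fix n assume n: "nat \<lceil>2 * \<bar>z\<bar>\<rceil> \<le> n"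
  have pos: "real n + a > 0" using assms by simp
  have G: "Gamma (real (Suc n) + a) = (real n + a) * Gamma (real n + a)"
    using Gamma_plus1_of_pos[OF pos] by (simp add: algebra_simps)
  have Gp: "Gamma (real n + a) > 0" using pos by simp
  have le: "\<bar>z\<bar> / (real n + a) \<le> 1/2"
    using n pos assms by (simp add: field_simps)
  have "norm (\<bar>z\<bar> ^ Suc n / Gamma (real (Suc n) + a))
      = \<bar>z\<bar> ^ n / Gamma (real n + a) * (\<bar>z\<bar> / (real n + a))"
    unfolding G using pos Gp mult_pos_pos[OF pos Gp]
    by (simp add: abs_mult field_simps del: of_nat_Suc)
  also have "\<dots> \<le> \<bar>z\<bar> ^ n / Gamma (real n + a) * (1/2)"
    by (rule mult_left_mono[OF le]) (use Gp in simp)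
  finally show "norm (\<bar>z\<bar> ^ Suc n / Gamma (real (Suc n) + a))
      \<le> 1/2 * norm (\<bar>z\<bar> ^ n / Gamma (real n + a))"
    using Gp by simp
qed simp

definition trunc_exp :: "real \<Rightarrow> nat \<Rightarrow> real" where
  "trunc_exp x m = (\<Sum>j\<le>m. x ^ j / fact j)"

lemma trunc_exp_nonneg: "x \<ge> 0 \<Longrightarrow> trunc_exp x m \<ge> 0"
  unfolding trunc_exp_def by (intro sum_nonneg) auto

lemma trunc_exp_le_exp:
  assumes "x \<ge> 0"
  shows "trunc_exp x m \<le> exp x"
proof -
  have "trunc_exp x m = (\<Sum>j\<in>{..m}. x ^ j /\<^sub>R fact j)"
    by (simp add: trunc_exp_def divide_inverse_commute scaleR_conv_of_real)
  also have "\<dots> \<le> (\<Sum>j. x ^ j /\<^sub>R fact j)"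
    by (rule sum_le_suminf) (use assms summable_exp in auto)
  finally show ?thesis by (simp add: exp_def)
qed

lemma trunc_exp_mult_le:
  assumes "x \<ge> 0"
  shows "x * trunc_exp x k \<le> real (Suc k) * trunc_exp x (Suc k)"
proof -
  have "x * trunc_exp x k = (\<Sum>j\<le>k. real (Suc j) * (x ^ Suc j / fact (Suc j)))"
    by (simp add: trunc_exp_def sum_distrib_left field_simps del: of_nat_Suc)
  also have "\<dots> \<le> (\<Sum>j\<le>k. real (Suc k) * (x ^ Suc j / fact (Suc j)))"
    by (intro sum_mono mult_right_mono) (use assms in auto)
  also have "\<dots> = real (Suc k) * (trunc_exp x (Suc k) - 1)"
    unfolding trunc_exp_def by (subst sum.atMost_Suc_shift) (simp add: sum_distrib_left)
  also have "\<dots> \<le> real (Suc k) * trunc_exp x (Suc k)"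
    by (simp add: algebra_simps)
  finally show ?thesis .
qed

lemma trunc_exp_power_fact_le:
  assumes "x \<ge> 0"
  shows "trunc_exp x m * x ^ d * fact m \<le> trunc_exp x (m + d) * fact (m + d)"
proof (induction d)
  case (Suc d)
  have "trunc_exp x m * x ^ Suc d * fact m = x * (trunc_exp x m * x ^ d * fact m)"
    by (simp add: algebra_simps)
  also have "\<dots> \<le> x * trunc_exp x (m + d) * fact (m + d)"
    using mult_left_mono[OF Suc.IH assms] by simp
  also have "\<dots> \<le> real (Suc (m + d)) * trunc_exp x (Suc (m + d)) * fact (m + d)"
    by (rule mult_right_mono[OF trunc_exp_mult_le[OF assms]]) simp
  also have "\<dots> = trunc_exp x (m + Suc d) * fact (m + Suc d)"
    by (simp add: algebra_simps)
  finally show ?case .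
qed simp

text \<open>That is, e_m(x) m!/x^m increases with m, in a form that also covers x = 0.\<close>
lemma trunc_exp_cross_le:
  assumes "x \<ge> 0" "m < k"
  shows "trunc_exp x m * x ^ k / fact k \<le> trunc_exp x k * x ^ m / fact m"
proof -
  obtain d where k: "k = m + d" using assms(2) less_imp_add_positive by blast
  have "trunc_exp x m * x ^ k / fact k = x ^ m * (trunc_exp x m * x ^ d * fact m) / (fact m * fact k)"
    unfolding k by (simp add: power_add field_simps)
  also have "\<dots> \<le> x ^ m * (trunc_exp x k * fact k) / (fact m * fact k)"
    using trunc_exp_power_fact_le[OF assms(1), of m d] k
    by (intro divide_right_mono mult_left_mono) (use assms in auto)
  also have "\<dots> = trunc_exp x k * x ^ m / fact m" by (simp add: field_simps)
  finally show ?thesis .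
qed

section \<open>A Chebyshev-type inequality for weighted means\<close>

lemma Chebyshev_sum_diff_le:
  fixes u v r :: "nat \<Rightarrow> real"
  assumes r: "\<And>m k. m < k \<Longrightarrow> r k \<le> r m"
    and uv: "\<And>m k. m < k \<Longrightarrow> u m * v k \<le> u k * v m"
    and n: "n \<ge> 2"
  shows "(\<Sum>m<n. u m * r m) * (\<Sum>k<n. v k) - (\<Sum>m<n. u m) * (\<Sum>k<n. v k * r k)
    \<le> (r 0 - r 1) * (u 0 * v 1 - u 1 * v 0)"
proof -
  \<comment> \<open>Symmetrising the double sum gives 2 D = sum of t m k over all pairs, each term \<le> 0.\<close>
  define t where "t m k = (r m - r k) * (u m * v k - u k * v m)" for m k
  have t_nonpos: "t m k \<le> 0" for m k
  proof (cases m k rule: linorder_cases)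
    case less
    then show ?thesis using r[OF less] uv[OF less] by (simp add: t_def mult_nonneg_nonpos)
  next
    case greater
    then show ?thesis using r[OF greater] uv[OF greater] by (simp add: t_def mult_nonpos_nonneg)
  qed (simp add: t_def)
  let ?D = "(\<Sum>m<n. u m * r m) * (\<Sum>k<n. v k) - (\<Sum>m<n. u m) * (\<Sum>k<n. v k * r k)"
  let ?A = "{..<n} \<times> {..<n}" and ?S = "{(0, 1), (1, 0)} :: (nat \<times> nat) set"
  have D: "?D = (\<Sum>m<n. \<Sum>k<n. u m * v k * (r m - r k))"
    unfolding sum_product sum_subtractf[symmetric] by (intro sum.cong refl) (simp add: algebra_simps)
  have D_swap: "?D = (\<Sum>m<n. \<Sum>k<n. u k * v m * (r k - r m))"
    unfolding D by (rule sum.swap)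
  have "2 * ?D = (\<Sum>m<n. \<Sum>k<n. u m * v k * (r m - r k)) + (\<Sum>m<n. \<Sum>k<n. u k * v m * (r k - r m))"
    unfolding mult_2 by (intro arg_cong2[where f = "(+)"] D D_swap)
  also have "\<dots> = (\<Sum>m<n. \<Sum>k<n. t m k)"
    by (simp only: sum.distrib[symmetric]) (simp add: t_def algebra_simps)
  also have "\<dots> = (\<Sum>p\<in>?A. t (fst p) (snd p))"
    by (simp add: sum.cartesian_product split_def)
  also have "\<dots> = (\<Sum>p\<in>?A - ?S. t (fst p) (snd p)) + (\<Sum>p\<in>?S. t (fst p) (snd p))"
    using n by (intro sum.subset_diff) auto
  also have "\<dots> \<le> (\<Sum>p\<in>?S. t (fst p) (snd p))"
    using t_nonpos by (simp add: sum_nonpos)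
  also have "\<dots> = 2 * ((r 0 - r 1) * (u 0 * v 1 - u 1 * v 0))"
    by (simp add: t_def algebra_simps)
  finally show ?thesis by simp
qed

lemma suminf_weighted_mean_less:
  fixes u v r :: "nat \<Rightarrow> real"
  assumes nonneg: "\<And>m. u m \<ge> 0" "\<And>m. v m \<ge> 0" "\<And>m. r m \<ge> 0"
    and r: "\<And>m k. m < k \<Longrightarrow> r k \<le> r m" and r01: "r 1 < r 0"
    and uv: "\<And>m k. m < k \<Longrightarrow> u m * v k \<le> u k * v m" and uv01: "u 0 * v 1 < u 1 * v 0"
    and summable: "summable u" "summable v"
  shows "(\<Sum>m. u m * r m) / (\<Sum>m. u m) < (\<Sum>k. v k * r k) / (\<Sum>k. v k)"
proof -
  have summable_r: "summable (\<lambda>m. w m * r m)" if "summable w" "\<And>m. w m \<ge> 0" for w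
  proof (rule summable_comparison_test)
    have "r m \<le> r 0" for m
      using r[of 0 m] by (cases m) auto
    then show "\<exists>N. \<forall>m\<ge>N. norm (w m * r m) \<le> r 0 * w m"
      using nonneg(3) that(2) by (intro exI allI impI) (simp add: mult_right_mono mult.commute)
  qed (intro summable_mult that)
  have "(\<lambda>n. (\<Sum>m<n. u m * r m) * (\<Sum>k<n. v k) - (\<Sum>m<n. u m) * (\<Sum>k<n. v k * r k))
      \<longlonglongrightarrow> (\<Sum>m. u m * r m) * (\<Sum>k. v k) - (\<Sum>m. u m) * (\<Sum>k. v k * r k)"
    by (intro tendsto_intros summable_LIMSEQ summable summable_r nonneg)
  then have "(\<Sum>m. u m * r m) * (\<Sum>k. v k) - (\<Sum>m. u m) * (\<Sum>k. v k * r k)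
      \<le> (r 0 - r 1) * (u 0 * v 1 - u 1 * v 0)"
    by (rule LIMSEQ_le_const2) (intro exI[of _ 2] allI impI Chebyshev_sum_diff_le r uv)
  moreover have "(r 0 - r 1) * (u 0 * v 1 - u 1 * v 0) < 0"
    using r01 uv01 by (simp add: mult_pos_neg)
  ultimately have cross: "(\<Sum>m. u m * r m) * (\<Sum>k. v k) < (\<Sum>m. u m) * (\<Sum>k. v k * r k)"
    by linarith
  have "u 1 * v 0 > 0"
    using mult_nonneg_nonneg[OF nonneg(1,2)] uv01 by (rule le_less_trans)
  then have "u 1 > 0" "v 0 > 0"
    using nonneg(1)[of 1] nonneg(2)[of 0] by (auto simp: zero_less_mult_iff)
  then have "(\<Sum>m. u m) > 0" "(\<Sum>k. v k) > 0"
    using summable nonneg(1,2) by (auto intro: suminf_pos2)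
  with cross show ?thesis
    by (simp add: field_simps)
qed

section \<open>Series for the Marcum and Bessel functions\<close>

text \<open>For x, t > 0, bessel_series nu x t = (xt)^{-nu/2} I_nu(2 sqrt(xt)) and
  marcum_series mu x t = e^{x+t} t^{-mu} P_mu(x,t).\<close>
definition bessel_coeff :: "real \<Rightarrow> real \<Rightarrow> nat \<Rightarrow> real" where
  "bessel_coeff nu x k = x ^ k / (fact k * Gamma (real k + nu + 1))"

definition marcum_coeff :: "real \<Rightarrow> real \<Rightarrow> nat \<Rightarrow> real" where
  "marcum_coeff mu x m = trunc_exp x m / Gamma (real m + mu + 1)"

definition bessel_series :: "real \<Rightarrow> real \<Rightarrow> real \<Rightarrow> real" where
  "bessel_series nu x t = (\<Sum>k. bessel_coeff nu x k * t ^ k)"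

definition marcum_series :: "real \<Rightarrow> real \<Rightarrow> real \<Rightarrow> real" where
  "marcum_series mu x t = (\<Sum>m. marcum_coeff mu x m * t ^ m)"

lemma summable_bessel_coeff:
  assumes "nu > -1"
  shows "summable (\<lambda>k. bessel_coeff nu x k * t ^ k)"
proof (rule summable_comparison_test)
  show "summable (\<lambda>k. \<bar>x * t\<bar> ^ k / Gamma (real k + (nu + 1)))"
    by (rule summable_power_div_Gamma) (use assms in simp)
  show "\<exists>N. \<forall>k\<ge>N. norm (bessel_coeff nu x k * t ^ k) \<le> \<bar>x * t\<bar> ^ k / Gamma (real k + (nu + 1))"
  proof (intro exI allI impI)
    fix k :: nat
    have Gp: "Gamma (real k + nu + 1) > 0" using assms by (intro Gamma_real_pos) simp
    have "norm (bessel_coeff nu x k * t ^ k) = \<bar>x * t\<bar> ^ k / (fact k * Gamma (real k + nu + 1))"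
      using Gp by (simp add: bessel_coeff_def abs_mult power_abs power_mult_distrib)
    also have "\<dots> \<le> \<bar>x * t\<bar> ^ k / Gamma (real k + nu + 1)"
      by (rule divide_left_mono) (use Gp in \<open>auto intro: mult_pos_pos\<close>)
    finally show "norm (bessel_coeff nu x k * t ^ k) \<le> \<bar>x * t\<bar> ^ k / Gamma (real k + (nu + 1))"
      by (simp add: add.assoc)
  qed
qed

lemma summable_marcum_coeff:
  assumes "mu > -1" "x \<ge> 0"
  shows "summable (\<lambda>m. marcum_coeff mu x m * t ^ m)"
proof (rule summable_comparison_test)
  show "summable (\<lambda>m. exp x * (\<bar>t\<bar> ^ m / Gamma (real m + (mu + 1))))"
    by (intro summable_mult summable_power_div_Gamma) (use assms in simp)
  show "\<exists>N. \<forall>m\<ge>N. norm (marcum_coeff mu x m * t ^ m) \<le> exp x * (\<bar>t\<bar> ^ m / Gamma (real m + (mu + 1)))"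
  proof (intro exI allI impI)
    fix m :: nat
    have Gp: "Gamma (real m + mu + 1) > 0" using assms by (intro Gamma_real_pos) simp
    have "norm (marcum_coeff mu x m * t ^ m) = trunc_exp x m * (\<bar>t\<bar> ^ m / Gamma (real m + mu + 1))"
      using Gp trunc_exp_nonneg[OF assms(2)] by (simp add: marcum_coeff_def abs_mult power_abs)
    also have "\<dots> \<le> exp x * (\<bar>t\<bar> ^ m / Gamma (real m + mu + 1))"
      by (rule mult_right_mono[OF trunc_exp_le_exp[OF assms(2)]]) (use Gp in simp)
    finally show "norm (marcum_coeff mu x m * t ^ m) \<le> exp x * (\<bar>t\<bar> ^ m / Gamma (real m + (mu + 1)))"
      by (simp add: add.assoc)
  qed
qed

lemma bessel_coeff_succ:
  "nu > -1 \<Longrightarrow> bessel_coeff (nu + 1) x k = bessel_coeff nu x k / (real k + nu + 1)"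
  using Gamma_plus1_of_pos[of "real k + nu + 1"]
  by (simp add: bessel_coeff_def add.assoc field_simps)

lemma marcum_coeff_succ:
  "mu > -1 \<Longrightarrow> marcum_coeff (mu + 1) x m = marcum_coeff mu x m / (real m + mu + 1)"
  using Gamma_plus1_of_pos[of "real m + mu + 1"]
  by (simp add: marcum_coeff_def add.assoc field_simps)

lemma suminf_bessel_coeff_zero: "(\<Sum>k. bessel_coeff nu 0 k * f k) = f 0 / Gamma (nu + 1)"
proof -
  have "(\<Sum>k. bessel_coeff nu 0 k * f k) = (\<Sum>k\<in>{0}. bessel_coeff nu 0 k * f k)"
    by (rule suminf_finite) (auto simp: bessel_coeff_def)
  then show ?thesis by (simp add: bessel_coeff_def)
qed

lemma bessel_I_eq_bessel_series:
  assumes "x > 0" "t > 0"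
  shows "bessel_I nu (2 * sqrt (x * t)) = x powr (nu / 2) * t powr (nu / 2) * bessel_series nu x t"
proof -
  have "sqrt (x * t) powr nu = x powr (nu / 2) * t powr (nu / 2)"
    using assms by (simp add: powr_half_sqrt[symmetric] powr_powr powr_mult)
  moreover have "sqrt (x * t) ^ (2 * k) = x ^ k * t ^ k" for k
    using assms by (simp add: power_mult power_mult_distrib)
  ultimately show ?thesis
    using assms by (simp add: bessel_I_def bessel_series_def bessel_coeff_def)
qed

lemma marcum_coeff_recurrence:
  assumes "mu > 0"
  shows "(real (Suc n) + mu) * marcum_coeff mu x (Suc n) - marcum_coeff mu x n
    = bessel_coeff (mu - 1) x (Suc n)"
proof -
  define g where "g = Gamma (real (Suc n) + mu)"
  have pos: "real (Suc n) + mu > 0" using assms by simp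
  have "(real (Suc n) + mu) * marcum_coeff mu x (Suc n) = trunc_exp x (Suc n) / g"
    using Gamma_plus1_of_pos[OF pos] pos by (simp add: marcum_coeff_def g_def)
  moreover have "marcum_coeff mu x n = trunc_exp x n / g"
    by (simp add: marcum_coeff_def g_def algebra_simps)
  moreover have "bessel_coeff (mu - 1) x (Suc n) = x ^ Suc n / fact (Suc n) / g"
    by (simp add: bessel_coeff_def g_def algebra_simps del: of_nat_Suc fact_Suc)
  ultimately show ?thesis
    by (simp add: trunc_exp_def diff_divide_distrib[symmetric] del: fact_Suc)
qed

lemma marcum_series_ode:
  assumes "mu > 0" "x \<ge> 0"
  shows "(mu - t) * marcum_series mu x t + t * (\<Sum>m. diffs (marcum_coeff mu x) m * t ^ m)
    = bessel_series (mu - 1) x t"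
proof -
  let ?c = "marcum_coeff mu x" and ?b = "bessel_coeff (mu - 1) x"
  let ?P = "marcum_series mu x t" and ?D = "\<Sum>m. diffs ?c m * t ^ m"
  have sP: "(\<lambda>m. ?c m * t ^ m) sums ?P"
    unfolding marcum_series_def by (rule summable_sums, rule summable_marcum_coeff) (use assms in auto)
  have sD: "(\<lambda>m. diffs ?c m * t ^ m) sums ?D"
    using termdiff_converges_all[of ?c t] summable_marcum_coeff[of mu x] assms
    by (intro summable_sums) auto
  have sS: "(\<lambda>k. ?b k * t ^ k) sums bessel_series (mu - 1) x t"
    unfolding bessel_series_def by (rule summable_sums, rule summable_bessel_coeff) (use assms in simp)
  have "t * (diffs ?c n * t ^ n) - t * (?c n * t ^ n) = (?b (Suc n) - mu * ?c (Suc n)) * t ^ Suc n" for n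
  proof -
    have "t * (diffs ?c n * t ^ n) - t * (?c n * t ^ n) = (real (Suc n) * ?c (Suc n) - ?c n) * t ^ Suc n"
      by (simp add: diffs_def algebra_simps del: of_nat_Suc)
    also have "real (Suc n) * ?c (Suc n) - ?c n = ?b (Suc n) - mu * ?c (Suc n)"
      using marcum_coeff_recurrence[OF assms(1), of n x] by (simp add: algebra_simps del: of_nat_Suc)
    finally show ?thesis .
  qed
  with sums_diff[OF sums_mult[OF sD, of t] sums_mult[OF sP, of t]]
  have "(\<lambda>n. (?b (Suc n) - mu * ?c (Suc n)) * t ^ Suc n) sums (t * ?D - t * ?P)"
    by simp
  moreover have "?b 0 = mu * ?c 0"
    using Gamma_plus1_of_pos[OF assms(1)] by (simp add: marcum_coeff_def bessel_coeff_def trunc_exp_def)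
  ultimately have "(\<lambda>n. (?b n - mu * ?c n) * t ^ n) sums (t * ?D - t * ?P)"
    using sums_Suc_iff[of "\<lambda>n. (?b n - mu * ?c n) * t ^ n"] by simp
  moreover have "(\<lambda>n. (?b n - mu * ?c n) * t ^ n) sums (bessel_series (mu - 1) x t - mu * ?P)"
    using sums_diff[OF sS sums_mult[OF sP, of mu]] by (simp add: algebra_simps)
  ultimately show ?thesis
    using sums_unique2 by (fastforce simp: algebra_simps)
qed

section \<open>The Marcum function as a primitive\<close>

definition marcum_primitive :: "real \<Rightarrow> real \<Rightarrow> real \<Rightarrow> real" where
  "marcum_primitive mu x t = exp (- x - t) * t powr mu * marcum_series mu x t"

lemma has_real_derivative_marcum_series:
  assumes "mu > -1" "x \<ge> 0"
  shows "(marcum_series mu x has_real_derivative (\<Sum>m. diffs (marcum_coeff mu x) m * t ^ m)) (at t)"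
  unfolding marcum_series_def[abs_def]
  by (rule termdiffs_strong_converges_everywhere, rule summable_marcum_coeff) (use assms in auto)

lemma has_real_derivative_marcum_primitive:
  assumes "mu > 0" "x \<ge> 0" "t > 0"
  shows "(marcum_primitive mu x has_real_derivative
    exp (- x - t) * t powr (mu - 1) * bessel_series (mu - 1) x t) (at t)"
proof -
  let ?D = "\<Sum>m. diffs (marcum_coeff mu x) m * t ^ m"
  have mu: "mu > -1" using assms(1) by simp
  have e: "((\<lambda>t. exp (- x - t)) has_real_derivative exp (- x - t) * (- 1)) (at t)"
    by (rule derivative_eq_intros refl | simp)+
  have deriv: "(marcum_primitive mu x has_real_derivative
      exp (- x - t) * (- 1) * t powr mu * marcum_series mu x t
      + exp (- x - t) * (mu * t powr (mu - 1)) * marcum_series mu x t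
      + exp (- x - t) * t powr mu * ?D) (at t)"
    unfolding marcum_primitive_def[abs_def]
    using DERIV_mult[OF DERIV_mult[OF e has_real_derivative_powr[OF assms(3)]]
        has_real_derivative_marcum_series[OF mu assms(2)]]
    by (simp add: algebra_simps)
  have tp: "t powr mu = t * t powr (mu - 1)"
    using assms(3) by (simp add: powr_mult_base)
  have "exp (- x - t) * (- 1) * t powr mu * marcum_series mu x t
      + exp (- x - t) * (mu * t powr (mu - 1)) * marcum_series mu x t
      + exp (- x - t) * t powr mu * ?D
    = exp (- x - t) * t powr (mu - 1) * ((mu - t) * marcum_series mu x t + t * ?D)"
    unfolding tp by (simp add: algebra_simps)
  with deriv show ?thesis
    using marcum_series_ode[OF assms(1,2), of t] by simp
qed

lemma has_integral_marcum_primitive: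
  assumes "mu > 0" "x \<ge> 0" "y > 0"
  shows "((\<lambda>t. exp (- x - t) * t powr (mu - 1) * bessel_series (mu - 1) x t)
    has_integral marcum_primitive mu x y) {0..y}"
proof -
  have mu: "mu > -1" using assms(1) by simp
  have "continuous_on {0..y} (marcum_series mu x)"
    by (intro continuous_at_imp_continuous_on ballI
        DERIV_isCont[OF has_real_derivative_marcum_series[OF mu assms(2)]])
  moreover have "continuous_on {0..y} (\<lambda>t::real. t powr mu)"
    by (rule continuous_on_powr') (use assms in \<open>auto intro: continuous_intros\<close>)
  moreover have "continuous_on {0..y} (\<lambda>t. exp (- x - t))"
    by (intro continuous_intros)
  ultimately have "continuous_on {0..y} (marcum_primitive mu x)"
    unfolding marcum_primitive_def[abs_def] by (intro continuous_on_mult) auto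
  then have "((\<lambda>t. exp (- x - t) * t powr (mu - 1) * bessel_series (mu - 1) x t)
      has_integral marcum_primitive mu x y - marcum_primitive mu x 0) {0..y}"
    by (intro fundamental_theorem_of_calculus_interior)
       (use assms has_real_derivative_marcum_primitive[OF assms(1,2)] in
         \<open>auto simp: has_real_derivative_iff_has_vector_derivative[symmetric]\<close>)
  then show ?thesis using assms(1) by (simp add: marcum_primitive_def)
qed

lemma marcumP_eq_marcum_primitive:
  assumes "mu > 0" "x \<ge> 0" "y > 0"
  shows "marcumP mu x y = marcum_primitive mu x y"
proof (cases "x = 0")
  case True
  have "bessel_series (mu - 1) 0 t = 1 / Gamma mu" for t
    using suminf_bessel_coeff_zero[of "mu - 1" "\<lambda>k. t ^ k"] by (simp add: bessel_series_def)
  moreover have "Gamma mu > 0" using assms(1) by simp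
  ultimately have "((\<lambda>t. t powr (mu - 1) * exp (- t)) has_integral Gamma mu * marcum_primitive mu 0 y) {0..y}"
    using has_integral_mult_right[OF has_integral_marcum_primitive[OF assms(1) _ assms(3), of 0], of "Gamma mu"]
    by (simp add: mult.commute)
  then have "lower_gamma mu y = Gamma mu * marcum_primitive mu 0 y"
    unfolding lower_gamma_def by (rule integral_unique)
  then show ?thesis
    using True \<open>Gamma mu > 0\<close> by (simp add: marcumP_def)
next
  case False
  then have xp: "x > 0" using assms by simp
  let ?c = "x powr ((mu - 1) / 2)"
  have integral: "((\<lambda>t. t powr ((mu - 1) / 2) * exp (- t - x) * bessel_I (mu - 1) (2 * sqrt (x * t)))
      has_integral ?c * marcum_primitive mu x y) {0..y}"
  proof (rule has_integral_spike_finite[where S = "{0}"])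
    fix t assume "t \<in> {0..y} - {0}"
    then have tp: "t > 0" by auto
    have "t powr ((mu - 1) / 2) * t powr ((mu - 1) / 2) = t powr (mu - 1)"
      by (simp add: powr_add[symmetric])
    then show "t powr ((mu - 1) / 2) * exp (- t - x) * bessel_I (mu - 1) (2 * sqrt (x * t))
        = ?c * (exp (- x - t) * t powr (mu - 1) * bessel_series (mu - 1) x t)"
      unfolding bessel_I_eq_bessel_series[OF xp tp] by (simp add: algebra_simps)
  qed (use has_integral_mult_right[OF has_integral_marcum_primitive[OF assms]] in simp_all)
  moreover have "x powr ((1 - mu) / 2) * ?c = 1"
    using xp by (simp add: powr_add[symmetric] add_divide_distrib[symmetric])
  ultimately show ?thesis
    using False integral_unique[OF integral] by (simp add: marcumP_def mult.assoc[symmetric])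
qed

lemma marcumP_succ_div_marcumP:
  assumes "mu > 0" "x \<ge> 0" "y > 0"
  shows "marcumP (mu + 1) x y / marcumP mu x y
    = y * (\<Sum>m. marcum_coeff mu x m * y ^ m * (1 / (real m + mu + 1)))
        / (\<Sum>m. marcum_coeff mu x m * y ^ m)"
proof -
  have "marcum_series (mu + 1) x y = (\<Sum>m. marcum_coeff mu x m * y ^ m * (1 / (real m + mu + 1)))"
    using assms(1) by (simp add: marcum_series_def marcum_coeff_succ)
  moreover have "y powr (mu + 1) = y * y powr mu"
    using assms(3) by (simp add: powr_add)
  ultimately show ?thesis
    using assms marcumP_eq_marcum_primitive[of "mu + 1" x y] marcumP_eq_marcum_primitive[of mu x y]
    by (simp add: marcum_primitive_def marcum_series_def)
qed

lemma marcum_c_succ_eq_series: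
  assumes "mu > 0" "x \<ge> 0" "y > 0"
  shows "marcum_c (mu + 1) x y
    = y * (\<Sum>k. bessel_coeff mu x k * y ^ k * (1 / (real k + mu + 1)))
        / (\<Sum>k. bessel_coeff mu x k * y ^ k)"
proof -
  have succ: "(\<Sum>k. bessel_coeff mu x k * y ^ k * (1 / (real k + mu + 1))) = bessel_series (mu + 1) x y"
    using assms(1) by (simp add: bessel_series_def bessel_coeff_succ)
  show ?thesis
  proof (cases "x = 0")
    case True
    have "(\<Sum>k. bessel_coeff mu 0 k * y ^ k) = 1 / Gamma (mu + 1)"
      using suminf_bessel_coeff_zero[of mu "\<lambda>k. y ^ k"] by simp
    moreover have "(\<Sum>k. bessel_coeff (mu + 1) 0 k * y ^ k) = 1 / ((mu + 1) * Gamma (mu + 1))"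
      using suminf_bessel_coeff_zero[of "mu + 1" "\<lambda>k. y ^ k"] Gamma_plus1_of_pos[of "mu + 1"] assms(1)
      by simp
    moreover have "Gamma (mu + 1) \<noteq> 0" using assms(1) Gamma_real_pos[of "mu + 1"] by linarith
    ultimately show ?thesis
      unfolding succ unfolding True using assms(1) by (simp add: marcum_c_def bessel_series_def)
  next
    case False
    then have xp: "x > 0" using assms by simp
    have "x powr ((mu + 1) / 2) = sqrt x * x powr (mu / 2)" "y powr ((mu + 1) / 2) = sqrt y * y powr (mu / 2)"
      using xp assms by (simp_all add: add_divide_distrib powr_add powr_half_sqrt)
    moreover have "sqrt (y / x) * sqrt x * sqrt y = y"
      using xp assms by (simp add: real_sqrt_divide)
    ultimately show ?thesis
      unfolding succ bessel_series_def[symmetric] using False xp assms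
      by (simp add: marcum_c_def bessel_I_eq_bessel_series field_simps)
  qed
qed

section \<open>Comparing the weights of the two means\<close>

lemma marcum_bessel_weights_cross_le:
  assumes "mu > -1" "x \<ge> 0" "y \<ge> 0" "m < k"
  shows "marcum_coeff mu x m * y ^ m * (bessel_coeff mu x k * y ^ k)
    \<le> marcum_coeff mu x k * y ^ k * (bessel_coeff mu x m * y ^ m)"
proof -
  define c where "c = y ^ (m + k) / (Gamma (real m + mu + 1) * Gamma (real k + mu + 1))"
  have "c \<ge> 0" using assms by (simp add: c_def)
  have "marcum_coeff mu x m * y ^ m * (bessel_coeff mu x k * y ^ k) = trunc_exp x m * x ^ k / fact k * c"
    by (simp add: marcum_coeff_def bessel_coeff_def c_def power_add field_simps)
  also have "\<dots> \<le> trunc_exp x k * x ^ m / fact m * c"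
    by (rule mult_right_mono[OF trunc_exp_cross_le[OF assms(2,4)] \<open>c \<ge> 0\<close>])
  also have "\<dots> = marcum_coeff mu x k * y ^ k * (bessel_coeff mu x m * y ^ m)"
    by (simp add: marcum_coeff_def bessel_coeff_def c_def power_add field_simps)
  finally show ?thesis .
qed

lemma marcum_bessel_weights_cross_less:
  assumes "mu > -1" "x \<ge> 0" "y > 0"
  shows "marcum_coeff mu x 0 * y ^ 0 * (bessel_coeff mu x 1 * y ^ 1)
    < marcum_coeff mu x 1 * y ^ 1 * (bessel_coeff mu x 0 * y ^ 0)"
proof -
  define g where "g = Gamma (mu + 1) * Gamma (1 + mu + 1)"
  have "g > 0"
    using assms(1) by (simp add: g_def)
  have "marcum_coeff mu x 0 * y ^ 0 * (bessel_coeff mu x 1 * y ^ 1) = x * y / g"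
    by (simp add: marcum_coeff_def bessel_coeff_def trunc_exp_def g_def)
  also have "\<dots> < (1 + x) * y / g"
    using assms(3) \<open>g > 0\<close> by (intro divide_strict_right_mono) (simp_all add: distrib_right)
  also have "\<dots> = marcum_coeff mu x 1 * y ^ 1 * (bessel_coeff mu x 0 * y ^ 0)"
    by (simp add: marcum_coeff_def bessel_coeff_def trunc_exp_def g_def)
  finally show ?thesis .
qed

theorem theorem3:
  fixes mu x y :: real
  assumes "mu > 0" and "x \<ge> 0" and "y > 0"
  shows "marcumP (mu + 1) x y / marcumP mu x y < marcum_c (mu + 1) x y"
proof -
  define u where "u m = marcum_coeff mu x m * y ^ m" for m
  define v where "v k = bessel_coeff mu x k * y ^ k" for k
  define r where "r k = 1 / (real k + mu + 1)" for k :: nat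
  have "(\<Sum>m. u m * r m) / (\<Sum>m. u m) < (\<Sum>k. v k * r k) / (\<Sum>k. v k)"
  proof (rule suminf_weighted_mean_less)
    show "u m \<ge> 0" "v m \<ge> 0" "r m \<ge> 0" for m
      using assms by (simp_all add: u_def v_def r_def marcum_coeff_def bessel_coeff_def trunc_exp_nonneg)
    show "r k \<le> r m" if "m < k" for m k
      using that assms(1) by (simp add: r_def frac_le)
    show "r 1 < r 0"
      using assms(1) by (simp add: r_def field_simps)
    show "u m * v k \<le> u k * v m" if "m < k" for m k
      using marcum_bessel_weights_cross_le[of mu x y m k] that assms by (simp add: u_def v_def)
    show "u 0 * v 1 < u 1 * v 0"
      using marcum_bessel_weights_cross_less[of mu x y] assms by (simp add: u_def v_def)
    show "summable u" "summable v"
      using summable_marcum_coeff[of mu x y] summable_bessel_coeff[of mu x y] assms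
      by (simp_all add: u_def[abs_def] v_def[abs_def])
  qed
  then have "y * ((\<Sum>m. u m * r m) / (\<Sum>m. u m)) < y * ((\<Sum>k. v k * r k) / (\<Sum>k. v k))"
    using assms(3) by (rule mult_strict_left_mono)
  then show ?thesis
    unfolding marcumP_succ_div_marcumP[OF assms] marcum_c_succ_eq_series[OF assms]
    by (simp only: u_def v_def r_def times_divide_eq_right)
qed

end
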